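(* Let $v\in C^1([0,T];C^1(\mathcal K^* ))$ and $B\in C([0,T];C^0(\mathcal K^* ))$ satisfy $\frac{dv}{dt}+I_v(\tilde D_1v)+\tilde D_0B=0$. Let $\gamma\in C^1([0,T];C_1)$ be a dual 1-chain that is materially advected, $\frac{d\gamma}{dt}=\mathcal L^{\rm chain}_{v(t)}\gamma$, and that is a cycle at time $0$, $\partial\gamma(0)=0$. Then the discrete circulation $\Gamma(t)=v(t)(\gamma(t))=\sum_j\gamma_j(t)v_j(t)$ is constant: $\frac{d\Gamma}{dt}=0$.
   Context: $C^k(\mathcal K^* )$ is the space of real dual $k$-cochains on a cell complex and $C_k$ the space of real dual $k$-chains (same dimension), with pairing $\alpha(\gamma)=\sum_j\alpha_j\gamma_j$. $\tilde D_0:C^0\to C^1$, $\tilde D_1:C^1\to C^2$ are dual coboundary (incidence) matrices with $\tilde D_1\tilde D_0=0$; the boundary $\partial:C_1\to C_0$ is $\partial=\tilde D_0^T$, so $(\tilde D_0\phi)(\gamma)=\phi(\partial\gamma)$. For each velocity $v$ there are linear maps $I_v:C^2\to C^1$ (the discrete contraction, the same one appearing in the momentum equation) and $I_v^{(1)}:C^1\to C^0$. The discrete Lie derivative is defined by Cartan's formula: on 1-cochains $\mathcal L_v\alpha=\tilde D_0(I_v^{(1)}\alpha)+I_v(\tilde D_1\alpha)$, on 0-cochains $\mathcal L_v\phi=I_v^{(1)}(\tilde D_0\phi)$. The chain Lie derivative $\mathcal L_v^{\rm chain}$ on $C_1$ and on $C_0$ is the adjoint of $\mathcal L_v$ with respect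 to the pairing: $\alpha(\mathcal L_v^{\rm chain}\gamma)=(\mathcal L_v\alpha)(\gamma)$ for all cochains $\alpha$ of the corresponding degree. *)

theory Defs
  imports "HOL-Analysis.Analysis"
begin

text \<open>Dual cochain/chain spaces are modelled as real ^ 'n0, real ^ 'n1, real ^ 'n2
  (the k-cochains and the k-chains have the same dimension).
  D0 :: real^'n0^'n1 is the dual coboundary C^0 -> C^1, D1 :: real^'n1^'n2 is C^1 -> C^2.
  The contractions are I v : C^2 -> C^1 and I1 v : C^1 -> C^0, for each velocity v in C^1.\<close>

definition pairing :: "real^'n \<Rightarrow> real^'n \<Rightarrow> real" where
  "pairing \<alpha> \<gamma> = (\<Sum>j\<in>UNIV. \<alpha> $ j * \<gamma> $ j)"

definition boundary :: "real^'n0^'n1 \<Rightarrow> real^'n1 \<Rightarrow> real^'n0" where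
  "boundary D0 \<gamma> = transpose D0 *v \<gamma>"

text \<open>Discrete Lie derivative via Cartan's formula.\<close>
definition lie1 :: "real^'n0^'n1 \<Rightarrow> real^'n1^'n2 \<Rightarrow> (real^'n1 \<Rightarrow> real^'n2 \<Rightarrow> real^'n1)
    \<Rightarrow> (real^'n1 \<Rightarrow> real^'n1 \<Rightarrow> real^'n0) \<Rightarrow> real^'n1 \<Rightarrow> real^'n1 \<Rightarrow> real^'n1" where
  "lie1 D0 D1 I I1 v \<alpha> = D0 *v (I1 v \<alpha>) + I v (D1 *v \<alpha>)"

definition lie0 :: "real^'n0^'n1 \<Rightarrow> (real^'n1 \<Rightarrow> real^'n1 \<Rightarrow> real^'n0)
    \<Rightarrow> real^'n1 \<Rightarrow> real^'n0 \<Rightarrow> real^'n0" where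
  "lie0 D0 I1 v \<phi> = I1 v (D0 *v \<phi>)"

definition lie_chain1 :: "real^'n0^'n1 \<Rightarrow> real^'n1^'n2 \<Rightarrow> (real^'n1 \<Rightarrow> real^'n2 \<Rightarrow> real^'n1)
    \<Rightarrow> (real^'n1 \<Rightarrow> real^'n1 \<Rightarrow> real^'n0) \<Rightarrow> real^'n1 \<Rightarrow> real^'n1 \<Rightarrow> real^'n1" where
  "lie_chain1 D0 D1 I I1 v \<gamma> =
     (THE c. \<forall>\<alpha>. pairing \<alpha> c = pairing (lie1 D0 D1 I I1 v \<alpha>) \<gamma>)"

definition lie_chain0 :: "real^'n0^'n1 \<Rightarrow> (real^'n1 \<Rightarrow> real^'n1 \<Rightarrow> real^'n0)
    \<Rightarrow> real^'n1 \<Rightarrow> real^'n0 \<Rightarrow> real^'n0" where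
  "lie_chain0 D0 I1 v c0 =
     (THE c. \<forall>\<phi>. pairing \<phi> c = pairing (lie0 D0 I1 v \<phi>) c0)"

definition circulation :: "real^'n1 \<Rightarrow> real^'n1 \<Rightarrow> real" where
  "circulation v \<gamma> = pairing v \<gamma>"

end

theory Submission
  imports Defs
begin

(* The momentum equation says that dv/dt + L_v v is the exact cochain D0 (I1_v v - B), so by the
   product rule dGamma/dt = (D0 (I1_v v - B))(gamma) = (I1_v v - B)(boundary gamma).  It remains to see
   that gamma stays a cycle.  Since D1 D0 = 0, the Lie derivative commutes with the coboundary, so
   by duality the boundary c of gamma solves the linear equation dc/dt = L^chain_v c; a Gronwall
   estimate on |c|^2, with a bound on L_v uniform along the compact time interval, forces c = 0. *)

lemma pairing_eq_inner: "pairing a b = a \<bullet> b"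
  by (simp add: pairing_def inner_vec_def)

lemma coboundary_inner_eq_inner_boundary: "(D0 *v \<phi>) \<bullet> \<gamma> = \<phi> \<bullet> boundary D0 \<gamma>"
  by (metis boundary_def dot_lmul_matrix inner_commute transpose_matrix_vector)

lemma The_pairing_eq_adjoint:
  fixes L :: "real^'n \<Rightarrow> real^'m"
  assumes "linear L"
  shows "(THE c. \<forall>\<alpha>. pairing \<alpha> c = pairing (L \<alpha>) \<gamma>) = adjoint L \<gamma>"
  unfolding pairing_eq_inner
proof (rule the_equality)
  show "\<forall>\<alpha>. \<alpha> \<bullet> adjoint L \<gamma> = L \<alpha> \<bullet> \<gamma>"
    using adjoint_works[OF assms] by blast
next
  fix c assume "\<forall>\<alpha>. \<alpha> \<bullet> c = L \<alpha> \<bullet> \<gamma>"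
  then have "\<forall>\<alpha>. \<alpha> \<bullet> c = \<alpha> \<bullet> adjoint L \<gamma>"
    using adjoint_works[OF assms] by simp
  then show "c = adjoint L \<gamma>"
    by (simp add: vector_eq_ldot)
qed

lemma linear_lie1:
  assumes "linear (I w)" "linear (I1 w)"
  shows "linear (lie1 D0 D1 I I1 w)"
proof -
  have "linear (\<lambda>\<alpha>. D0 *v (I1 w \<alpha>) + I w (D1 *v \<alpha>))"
    by (intro linear_compose_add linear_compose[of "I1 w" "(*v) D0", unfolded o_def]
          linear_compose[of "(*v) D1" "I w", unfolded o_def] assms matrix_vector_mul_linear)
  then show ?thesis
    unfolding lie1_def[abs_def] by simp
qed

lemma linear_lie0:
  assumes "linear (I1 w)"
  shows "linear (lie0 D0 I1 w)"
  unfolding lie0_def[abs_def]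
  by (rule linear_compose[of "(*v) D0" "I1 w", unfolded o_def]) (use assms in auto)

lemma lie_chain1_eq_adjoint:
  assumes "linear (I w)" "linear (I1 w)"
  shows "lie_chain1 D0 D1 I I1 w = adjoint (lie1 D0 D1 I I1 w)"
  using The_pairing_eq_adjoint[OF linear_lie1[of I w I1 D0 D1, OF assms]] by (auto simp: lie_chain1_def)

lemma lie_chain0_eq_adjoint:
  assumes "linear (I1 w)"
  shows "lie_chain0 D0 I1 w = adjoint (lie0 D0 I1 w)"
  using The_pairing_eq_adjoint[OF linear_lie0[of I1 w D0, OF assms]] by (auto simp: lie_chain0_def)

lemma lie1_coboundary:
  assumes "D1 ** D0 = 0" "linear (I w)"
  shows "lie1 D0 D1 I I1 w (D0 *v \<phi>) = D0 *v lie0 D0 I1 w \<phi>"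
proof -
  have "D1 *v (D0 *v \<phi>) = 0"
    by (simp add: matrix_vector_mul_assoc assms(1))
  moreover have "I w 0 = 0"
    using assms(2) by (rule linear_0)
  ultimately show ?thesis
    by (simp add: lie1_def lie0_def)
qed

lemma boundary_lie_chain1:
  assumes "D1 ** D0 = 0" "linear (I w)" "linear (I1 w)"
  shows "boundary D0 (lie_chain1 D0 D1 I I1 w \<gamma>) = lie_chain0 D0 I1 w (boundary D0 \<gamma>)"
proof -
  have "\<phi> \<bullet> boundary D0 (lie_chain1 D0 D1 I I1 w \<gamma>) = \<phi> \<bullet> lie_chain0 D0 I1 w (boundary D0 \<gamma>)"
    for \<phi>
    by (simp add: coboundary_inner_eq_inner_boundary[symmetric] lie_chain1_eq_adjoint
        lie_chain0_eq_adjoint adjoint_works linear_lie1 linear_lie0 lie1_coboundary assms)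
  then show ?thesis
    using vector_eq_ldot by blast
qed

lemma norm_linear_le_sum_Basis:
  fixes f :: "'a::euclidean_space \<Rightarrow> 'b::real_normed_vector"
  assumes "linear f"
  shows "norm (f x) \<le> (\<Sum>b\<in>Basis. norm (f b)) * norm x"
proof -
  have "f x = f (\<Sum>b\<in>Basis. (x \<bullet> b) *\<^sub>R b)"
    by (simp add: euclidean_representation)
  then have "norm (f x) = norm (\<Sum>b\<in>Basis. (x \<bullet> b) *\<^sub>R f b)"
    using assms by (simp add: linear_sum linear_scale)
  also have "\<dots> \<le> (\<Sum>b\<in>Basis. norm x * norm (f b))"
    by (intro sum_norm_le) (simp add: Basis_le_norm mult_right_mono)
  finally show ?thesis
    by (simp add: sum_distrib_left mult.commute)
qed

lemma uniformly_bounded_linear_family: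
  fixes A :: "'t::topological_space \<Rightarrow> 'a::euclidean_space \<Rightarrow> 'b::real_normed_vector"
  assumes "\<And>t. t \<in> S \<Longrightarrow> linear (A t)"
    and "\<And>b. continuous_on S (\<lambda>t. A t b)"
    and "compact S"
  obtains K where "\<And>t x. t \<in> S \<Longrightarrow> norm (A t x) \<le> K * norm x"
proof -
  define M where "M t = (\<Sum>b\<in>Basis. norm (A t b))" for t
  have "continuous_on S M"
    unfolding M_def by (intro continuous_intros assms(2))
  then have "bounded (M ` S)"
    by (rule compact_imp_bounded[OF compact_continuous_image[OF _ assms(3)]])
  then obtain K where K: "\<And>t. t \<in> S \<Longrightarrow> norm (M t) \<le> K"
    unfolding bounded_iff by blast
  have "norm (A t x) \<le> K * norm x" if "t \<in> S" for t x
  proof -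
    have "norm (A t x) \<le> M t * norm x"
      unfolding M_def by (rule norm_linear_le_sum_Basis[OF assms(1)[OF that]])
    also have "\<dots> \<le> K * norm x"
      using K[OF that] by (intro mult_right_mono) auto
    finally show ?thesis .
  qed
  then show ?thesis by (rule that)
qed

lemma gronwall_zero:
  fixes f f' :: "real \<Rightarrow> real"
  assumes deriv: "\<And>t. t \<in> {0..T} \<Longrightarrow> (f has_real_derivative f' t) (at t within {0..T})"
    and deriv_le: "\<And>t. t \<in> {0..T} \<Longrightarrow> f' t \<le> K * f t"
    and nonneg: "\<And>t. t \<in> {0..T} \<Longrightarrow> f t \<ge> 0"
    and initial: "f 0 = 0"
    and t: "t \<in> {0..T}"
  shows "f t = 0"
proof -
  define g where "g s = f s * exp (- (K * s))" for s
  define g' where "g' s = (f' s - K * f s) * exp (- (K * s))" for s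
  have "(g has_real_derivative g' s) (at s within {0..t})" if "s \<in> {0..t}" for s
  proof -
    have s: "s \<in> {0..T}" using that t by auto
    have "(g has_real_derivative g' s) (at s within {0..T})"
      unfolding g_def g'_def
      by (rule derivative_eq_intros deriv[OF s] refl | simp add: algebra_simps)+
    then show ?thesis
      by (rule DERIV_subset) (use t in auto)
  qed
  then obtain x where x: "x \<in> {0..t}" "g t - g 0 = g' x * (t - 0)"
    using t mvt_very_simple[of 0 t g "\<lambda>s h. g' s * h"]
    by (auto simp: has_field_derivative_def)
  have "g' x \<le> 0"
    using deriv_le[of x] x(1) t by (simp add: g'_def mult_nonpos_nonneg)
  then have "g t \<le> 0"
    using x t initial by (simp add: g_def mult_nonpos_nonneg)
  then have "f t \<le> 0"
    by (simp add: g_def mult_le_0_iff)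
  with nonneg[OF t] show ?thesis by simp
qed

lemma vector_gronwall_zero:
  fixes c c' :: "real \<Rightarrow> 'a::real_inner"
  assumes deriv: "\<And>t. t \<in> {0..T} \<Longrightarrow> (c has_vector_derivative c' t) (at t within {0..T})"
    and dissipative: "\<And>t. t \<in> {0..T} \<Longrightarrow> c' t \<bullet> c t \<le> K * (c t \<bullet> c t)"
    and initial: "c 0 = 0"
    and t: "t \<in> {0..T}"
  shows "c t = 0"
proof -
  have "c t \<bullet> c t = 0"
  proof (rule gronwall_zero[where f = "\<lambda>s. c s \<bullet> c s" and f' = "\<lambda>s. 2 * (c' s \<bullet> c s)" and K = "2 * K"])
    fix s assume s: "s \<in> {0..T}"
    have "((\<lambda>s. c s \<bullet> c s) has_vector_derivative c s \<bullet> c' s + c' s \<bullet> c s) (at s within {0..T})"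
      by (rule bounded_bilinear.has_vector_derivative[OF bounded_bilinear_inner deriv[OF s] deriv[OF s]])
    then show "((\<lambda>s. c s \<bullet> c s) has_real_derivative 2 * (c' s \<bullet> c s)) (at s within {0..T})"
      by (simp add: has_real_derivative_iff_has_vector_derivative inner_commute)
    show "2 * (c' s \<bullet> c s) \<le> 2 * K * (c s \<bullet> c s)"
      using dissipative[OF s] by simp
  qed (use initial t in auto)
  then show ?thesis by simp
qed

lemma advected_chain_stays_cycle:
  assumes complex: "D1 ** D0 = 0"
    and I_linear: "\<And>w. linear (I w)"
    and I1_linear: "\<And>w. linear (I1 w)"
    and I1_cont: "\<And>\<alpha>. continuous_on UNIV (\<lambda>w. I1 w \<alpha>)"
    and v_cont: "continuous_on {0..T} v"
    and \<gamma>_deriv: "\<And>t. t \<in> {0..T} \<Longrightarrow> (\<gamma> has_vector_derivative \<gamma>' t) (at t within {0..T})"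
    and advected: "\<And>t. t \<in> {0..T} \<Longrightarrow> \<gamma>' t = lie_chain1 D0 D1 I I1 (v t) (\<gamma> t)"
    and cycle0: "boundary D0 (\<gamma> 0) = 0"
    and t: "t \<in> {0..T}"
  shows "boundary D0 (\<gamma> t) = 0"
proof -
  have lie0_cont: "continuous_on {0..T} (\<lambda>s. lie0 D0 I1 (v s) \<phi>)" for \<phi>
    unfolding lie0_def by (rule continuous_on_compose2[OF I1_cont v_cont]) auto
  obtain K where K: "\<And>s \<phi>. s \<in> {0..T} \<Longrightarrow> norm (lie0 D0 I1 (v s) \<phi>) \<le> K * norm \<phi>"
  proof (rule uniformly_bounded_linear_family[OF _ lie0_cont compact_Icc])
    show "linear (lie0 D0 I1 (v s))" for s
      by (rule linear_lie0[OF I1_linear])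
  qed blast
  define c where "c s = boundary D0 (\<gamma> s)" for s
  show ?thesis
    unfolding c_def[symmetric]
  proof (rule vector_gronwall_zero[where c' = "\<lambda>s. lie_chain0 D0 I1 (v s) (c s)" and K = K])
    fix s assume s: "s \<in> {0..T}"
    have "(c has_vector_derivative boundary D0 (\<gamma>' s)) (at s within {0..T})"
      unfolding c_def boundary_def
      by (rule bounded_linear.has_vector_derivative[OF matrix_vector_mul_bounded_linear \<gamma>_deriv[OF s]])
    then show "(c has_vector_derivative lie_chain0 D0 I1 (v s) (c s)) (at s within {0..T})"
      by (simp add: advected[OF s] boundary_lie_chain1 complex I_linear I1_linear c_def)
    have "lie_chain0 D0 I1 (v s) (c s) \<bullet> c s = c s \<bullet> lie0 D0 I1 (v s) (c s)"
      by (simp add: lie_chain0_eq_adjoint adjoint_clauses linear_lie0 I1_linear)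
    also have "\<dots> \<le> norm (c s) * (K * norm (c s))"
      by (rule order_trans[OF norm_cauchy_schwarz mult_left_mono[OF K[OF s]]]) simp
    also have "\<dots> = K * (c s \<bullet> c s)"
      by (simp add: power2_norm_eq_inner[symmetric] power2_eq_square)
    finally show "lie_chain0 D0 I1 (v s) (c s) \<bullet> c s \<le> K * (c s \<bullet> c s)" .
  qed (use cycle0 t c_def in auto)
qed

theorem theorem3p5:
  fixes D0 :: "real^'n0^'n1" and D1 :: "real^'n1^'n2"
    and I :: "real^'n1 \<Rightarrow> real^'n2 \<Rightarrow> real^'n1"
    and I1 :: "real^'n1 \<Rightarrow> real^'n1 \<Rightarrow> real^'n0"
    and T :: real
    and v v' :: "real \<Rightarrow> real^'n1" and B :: "real \<Rightarrow> real^'n0"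
    and \<gamma> \<gamma>' :: "real \<Rightarrow> real^'n1"
  assumes complex: "D1 ** D0 = 0"
    and I_linear: "\<And>w. linear (I w)"
    and I1_linear: "\<And>w. linear (I1 w)"
    and I1_cont: "\<And>\<alpha>. continuous_on UNIV (\<lambda>w. I1 w \<alpha>)"
    and v_deriv: "\<And>t. t \<in> {0..T} \<Longrightarrow> (v has_vector_derivative v' t) (at t within {0..T})"
    and v'_cont: "continuous_on {0..T} v'"
    and B_cont: "continuous_on {0..T} B"
    and momentum: "\<And>t. t \<in> {0..T} \<Longrightarrow> v' t + I (v t) (D1 *v v t) + D0 *v B t = 0"
    and \<gamma>_deriv: "\<And>t. t \<in> {0..T} \<Longrightarrow> (\<gamma> has_vector_derivative \<gamma>' t) (at t within {0..T})"
    and \<gamma>'_cont: "continuous_on {0..T} \<gamma>'"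
    and advected: "\<And>t. t \<in> {0..T} \<Longrightarrow> \<gamma>' t = lie_chain1 D0 D1 I I1 (v t) (\<gamma> t)"
    and cycle0: "boundary D0 (\<gamma> 0) = 0"
  shows "\<forall>t\<in>{0..T}. ((\<lambda>s. circulation (v s) (\<gamma> s)) has_real_derivative 0) (at t within {0..T})"
proof
  fix t assume t: "t \<in> {0..T}"
  have cycle: "boundary D0 (\<gamma> t) = 0"
    using advected_chain_stays_cycle[OF complex I_linear I1_linear I1_cont
        continuous_on_vector_derivative[OF v_deriv] \<gamma>_deriv advected cycle0 t] .
  have "v' t + lie1 D0 D1 I I1 (v t) (v t) = D0 *v (I1 (v t) (v t) - B t)"
    using momentum[OF t]
    by (simp add: lie1_def matrix_vector_mult_diff_distrib eq_neg_iff_add_eq_0[symmetric] add.assoc)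
  then have "v' t \<bullet> \<gamma> t + v t \<bullet> \<gamma>' t = 0"
    by (simp add: advected[OF t] lie_chain1_eq_adjoint adjoint_works linear_lie1 I_linear I1_linear
        coboundary_inner_eq_inner_boundary cycle flip: inner_add_left)
  moreover have "((\<lambda>s. v s \<bullet> \<gamma> s) has_vector_derivative v t \<bullet> \<gamma>' t + v' t \<bullet> \<gamma> t) (at t within {0..T})"
    by (rule bounded_bilinear.has_vector_derivative[OF bounded_bilinear_inner v_deriv[OF t] \<gamma>_deriv[OF t]])
  ultimately show "((\<lambda>s. circulation (v s) (\<gamma> s)) has_real_derivative 0) (at t within {0..T})"
    by (simp add: circulation_def pairing_eq_inner has_real_derivative_iff_has_vector_derivative add.commute)
qed

end
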